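(* Let $k$ be a real division algebra (one of $\mathbb{R},\mathbb{C},\mathbb{H},\mathbb{O}$) and let $\mathcal Z\subset k$ be a discrete subring closed under conjugation. Let $(a_n)_{n\ge1}$ be a sequence in $\mathcal Z$ and $x_0\in k$, and set $x_n=T_{a_n}\cdots T_{a_1}x_0$. Suppose that all $x_n$ are defined and $\|x_n\|<1$ for all $n\geq 0$. Then the associated continued fraction converges to $x_0$: \[x_0=\lim_{n\to\infty} T^{-1}_{a_1}\cdots T^{-1}_{a_n}0=\lim_{n\to\infty} \cfrac{1}{a_1+\cfrac{1}{\ddots+\cfrac{1}{a_n}}}.\]
   Context: $k$ is identified with $\mathbb{R}^d$ ($d=1,2,4,8$) with basis $1=e_0,e_1,\dots,e_{d-1}$ and its standard multiplication; for $x=a_0+\sum_{i\ge1}a_ie_i$, $\Re(x)=a_0$, $\overline{x}=\Re(x)-(x-\Re(x))$, $\|x\|^2=x\overline{x}$ (Euclidean norm), and convergence is with respect to the Euclidean distance. For $p,q\in k$, $p/q=pq^{-1}$. A subring is discrete if it is a discrete subset of $\mathbb{R}^d$. For a digit $a\in\mathcal Z$, $T_a x=x^{-1}-a$ and $T_a^{-1}x=(x+a)^{-1}$. The case $n=0$ means $x_0$ itself. *)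

theory Defs
  imports Complex_Main "HOL-Library.Function_Algebras"
begin

text \<open>
  The real division algebra k = R^d, d = 2^m with m \<le> 3 (R, C, H, O), is modelled
  on functions nat \<Rightarrow> real whose coordinates i \<ge> d vanish; coordinate i is the
  coefficient of the basis vector e_i (e_0 = 1).  The multiplication is the
  Cayley--Dickson doubling (a,b)(c,e) = (ac - e* b, e a + b c*), which gives the
  standard multiplication of R, C, H, O with respect to an orthonormal basis.
\<close>

definition kset :: "nat \<Rightarrow> (nat \<Rightarrow> real) set" where
  "kset m = {x. \<forall>i\<ge>2^m. x i = 0}"

definition kone :: "nat \<Rightarrow> real" where
  "kone = (\<lambda>i. if i = 0 then 1 else 0)"

definition lo_part :: "nat \<Rightarrow> (nat \<Rightarrow> real) \<Rightarrow> (nat \<Rightarrow> real)" where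
  "lo_part m x = (\<lambda>i. if i < 2^m then x i else 0)"

definition hi_part :: "nat \<Rightarrow> (nat \<Rightarrow> real) \<Rightarrow> (nat \<Rightarrow> real)" where
  "hi_part m x = (\<lambda>i. if i < 2^m then x (i + 2^m) else 0)"

definition join_parts :: "nat \<Rightarrow> (nat \<Rightarrow> real) \<Rightarrow> (nat \<Rightarrow> real) \<Rightarrow> (nat \<Rightarrow> real)" where
  "join_parts m p q = (\<lambda>i. if i < 2^m then p i else if i < 2 * 2^m then q (i - 2^m) else 0)"

definition kconj :: "nat \<Rightarrow> (nat \<Rightarrow> real) \<Rightarrow> (nat \<Rightarrow> real)" where
  "kconj m x = (\<lambda>i. if i = 0 then x 0 else if i < 2^m then - x i else 0)"

fun kmult :: "nat \<Rightarrow> (nat \<Rightarrow> real) \<Rightarrow> (nat \<Rightarrow> real) \<Rightarrow> (nat \<Rightarrow> real)" where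
  "kmult 0 x y = (\<lambda>i. if i = 0 then x 0 * y 0 else 0)"
| "kmult (Suc m) x y =
     join_parts m
       (kmult m (lo_part m x) (lo_part m y) - kmult m (kconj m (hi_part m y)) (hi_part m x))
       (kmult m (hi_part m y) (lo_part m x) + kmult m (hi_part m x) (kconj m (lo_part m y)))"

definition knorm :: "nat \<Rightarrow> (nat \<Rightarrow> real) \<Rightarrow> real" where
  "knorm m x = sqrt (\<Sum>i<2^m. (x i)\<^sup>2)"

definition kinv :: "nat \<Rightarrow> (nat \<Rightarrow> real) \<Rightarrow> (nat \<Rightarrow> real)" where
  "kinv m x = (\<lambda>i. kconj m x i / (knorm m x)\<^sup>2)"

definition is_subring :: "nat \<Rightarrow> (nat \<Rightarrow> real) set \<Rightarrow> bool" where
  "is_subring m Z \<longleftrightarrow> Z \<subseteq> kset m \<and> 0 \<in> Z \<and> kone \<in> Z \<and>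
     (\<forall>x\<in>Z. \<forall>y\<in>Z. x + y \<in> Z \<and> x - y \<in> Z \<and> kmult m x y \<in> Z)"

definition is_discrete :: "nat \<Rightarrow> (nat \<Rightarrow> real) set \<Rightarrow> bool" where
  "is_discrete m Z \<longleftrightarrow> (\<forall>z\<in>Z. \<exists>e>0. \<forall>w\<in>Z. w \<noteq> z \<longrightarrow> e \<le> knorm m (w - z))"

definition Tmap :: "nat \<Rightarrow> (nat \<Rightarrow> real) \<Rightarrow> (nat \<Rightarrow> real) \<Rightarrow> (nat \<Rightarrow> real)" where
  "Tmap m a x = kinv m x - a"

definition Tinv :: "nat \<Rightarrow> (nat \<Rightarrow> real) \<Rightarrow> (nat \<Rightarrow> real) \<Rightarrow> (nat \<Rightarrow> real)" where
  "Tinv m a x = kinv m (x + a)"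

fun orbit :: "nat \<Rightarrow> (nat \<Rightarrow> nat \<Rightarrow> real) \<Rightarrow> (nat \<Rightarrow> real) \<Rightarrow> nat \<Rightarrow> (nat \<Rightarrow> real)" where
  "orbit m a x0 0 = x0"
| "orbit m a x0 (Suc n) = Tmap m (a (Suc n)) (orbit m a x0 n)"

fun tinv_comp :: "nat \<Rightarrow> (nat \<Rightarrow> nat \<Rightarrow> real) \<Rightarrow> nat \<Rightarrow> (nat \<Rightarrow> real) \<Rightarrow> (nat \<Rightarrow> real)" where
  "tinv_comp m a 0 y = y"
| "tinv_comp m a (Suc n) y = tinv_comp m a n (Tinv m (a (Suc n)) y)"

end

theory Submission
  imports Defs
begin

text \<open>Let \<open>z\<^sub>n\<close> be the \<open>n\<close>-th convergent.  Inversion obeys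
  \<open>\<bar>x\<^sup>-\<^sup>1 - y\<^sup>-\<^sup>1\<bar> = \<bar>x - y\<bar> / (\<bar>x\<bar> \<bar>y\<bar>)\<close>, and in a discrete subring closed under conjugation
  \<open>\<bar>z\<bar>\<^sup>2 = z z\<^sup>*\<close> is an integer.  Unwinding the recursion from \<open>0\<close> therefore writes
  \<open>z\<^sub>n = u / N\<close> with \<open>u \<in> Z\<close>, \<open>N\<close> a positive integer and
  \<open>\<bar>x\<^sub>0 - z\<^sub>n\<bar>\<^sup>2 N = \<bar>x\<^sub>0\<bar>\<^sup>2 \<cdots> \<bar>x\<^sub>n\<bar>\<^sup>2\<close>.  The right-hand side is strictly decreasing in \<open>n\<close>,
  so the pairs \<open>(N, u)\<close> are pairwise distinct, while an error bounded below forces them into a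
  finite set.\<close>

lemma sum_lessThan_add_split:
  fixes f :: "nat \<Rightarrow> 'a::comm_monoid_add"
  shows "(\<Sum>i<a + b. f i) = (\<Sum>i<a. f i) + (\<Sum>i<b. f (a + i))"
  by (induction b) (simp_all add: add.assoc)

lemma prod_atMost_less_1:
  fixes f :: "nat \<Rightarrow> real"
  assumes "\<And>k. 0 \<le> f k" "\<And>k. f k < 1"
  shows "(\<Prod>k\<le>n. f k) < 1"
proof (induction n)
  case (Suc n)
  have "(\<Prod>k\<le>n. f k) * f (Suc n) \<le> (\<Prod>k\<le>n. f k)"
    using assms by (simp add: mult_left_le prod_nonneg less_imp_le)
  then show ?case
    using Suc by simp
qed (use assms in simp)

lemma inj_prod_atMost:
  fixes f :: "nat \<Rightarrow> real"
  assumes "\<And>k. 0 < f k" "\<And>k. f k < 1"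
  shows "inj (\<lambda>n. \<Prod>k\<le>n. f k)"
proof -
  have "strict_mono (\<lambda>n. - (\<Prod>k\<le>n. f k))"
    using assms by (simp add: strict_mono_Suc_iff prod_pos mult_less_cancel_left1)
  then have "inj (\<lambda>n. - (\<Prod>k\<le>n. f k))"
    by (rule strict_mono_imp_inj_on)
  then show ?thesis
    by (simp add: inj_on_def)
qed

lemma tendsto_zero_if_finite_ge:
  fixes f :: "nat \<Rightarrow> real"
  assumes "\<And>n. 0 \<le> f n" and "\<And>r. r > 0 \<Longrightarrow> finite {n. r \<le> f n}"
  shows "f \<longlonglongrightarrow> 0"
proof (rule order_tendstoI)
  fix r :: real
  assume "r > 0"
  then show "\<forall>\<^sub>F n in sequentially. f n < r"
    using assms(2) by (simp add: cofinite_eq_sequentially[symmetric] eventually_cofinite not_less)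
next
  fix r :: real
  assume "r < 0"
  then show "\<forall>\<^sub>F n in sequentially. r < f n"
    using assms(1) by (intro always_eventually) (metis less_le_trans)
qed

definition knorm2 :: "nat \<Rightarrow> (nat \<Rightarrow> real) \<Rightarrow> real" where
  "knorm2 m x = (\<Sum>i<2^m. (x i)\<^sup>2)"

definition kinner :: "nat \<Rightarrow> (nat \<Rightarrow> real) \<Rightarrow> (nat \<Rightarrow> real) \<Rightarrow> real" where
  "kinner m x y = (\<Sum>i<2^m. x i * y i)"

definition kreal :: "real \<Rightarrow> nat \<Rightarrow> real" where
  "kreal r = (\<lambda>i. if i = 0 then r else 0)"

definition kscale :: "real \<Rightarrow> (nat \<Rightarrow> real) \<Rightarrow> (nat \<Rightarrow> real)" where
  "kscale c x = (\<lambda>i. c * x i)"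

lemma kone_eq_kreal: "kone = kreal 1"
  by (simp add: kone_def kreal_def)

lemma kreal_add: "kreal r + kreal s = kreal (r + s)"
  by (auto simp: kreal_def)

lemma kreal_diff: "kreal r - kreal s = kreal (r - s)"
  by (auto simp: kreal_def)

lemma kreal_eq_0_iff [simp]: "kreal r = 0 \<longleftrightarrow> r = 0"
  by (auto simp: kreal_def fun_eq_iff)

lemma kreal_eq_kscale: "kreal r = kscale r kone"
  by (auto simp: kreal_def kscale_def kone_def)

subsection \<open>The Cayley--Dickson multiplication\<close>

lemma lo_part_uminus: "lo_part m (- x) = - lo_part m x"
  and hi_part_uminus: "hi_part m (- x) = - hi_part m x"
  and kconj_uminus: "kconj m (- x) = - kconj m x"
  and join_parts_uminus: "join_parts m (- p) (- q) = - join_parts m p q"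
  by (auto simp: lo_part_def hi_part_def kconj_def join_parts_def)

lemma lo_part_kreal: "lo_part m (kreal r) = kreal r"
  and hi_part_kreal: "hi_part m (kreal r) = 0"
  and kconj_kreal: "kconj m (kreal r) = kreal r"
  and join_parts_kreal: "join_parts m (kreal r) 0 = kreal r"
  by (auto simp: lo_part_def hi_part_def kconj_def join_parts_def kreal_def)

lemma lo_part_kconj: "lo_part m (kconj (Suc m) x) = kconj m (lo_part m x)"
  and hi_part_kconj: "hi_part m (kconj (Suc m) x) = - hi_part m x"
  by (auto simp: lo_part_def hi_part_def kconj_def)

lemma kmult_uminus: "kmult m (- x) y = - kmult m x y \<and> kmult m x (- y) = - kmult m x y"
proof (induction m arbitrary: x y)
  case (Suc m)
  show ?case
    by (simp only: kmult.simps lo_part_uminus hi_part_uminus kconj_uminus Suc.IH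
        join_parts_uminus[symmetric])
      (intro conjI arg_cong2[where f = "join_parts m"]; simp add: fun_eq_iff)
qed auto

lemma kmult_zero_left [simp]: "kmult m 0 y = 0"
  and kmult_zero_right [simp]: "kmult m x 0 = 0"
  using kmult_uminus[of m 0 y] kmult_uminus[of m x 0] by (auto simp: fun_eq_iff)

lemma kmult_kreal: "kmult m (kreal r) (kreal s) = kreal (r * s)"
proof (induction m arbitrary: r s)
  case 0
  show ?case by (auto simp: kreal_def)
next
  case (Suc m)
  show ?case
    by (simp add: Suc.IH lo_part_kreal hi_part_kreal kconj_kreal join_parts_kreal)
qed

lemma kconj_in_kset: "kconj m x \<in> kset m"
  and kscale_in_kset: "x \<in> kset m \<Longrightarrow> kscale c x \<in> kset m"
  and kset_add: "x \<in> kset m \<Longrightarrow> y \<in> kset m \<Longrightarrow> x + y \<in> kset m"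
  and kset_diff: "x \<in> kset m \<Longrightarrow> y \<in> kset m \<Longrightarrow> x - y \<in> kset m"
  by (auto simp: kset_def kconj_def kscale_def)

lemma kconj_kconj: "x \<in> kset m \<Longrightarrow> kconj m (kconj m x) = x"
  by (auto simp: kconj_def kset_def)

lemma kconj_kscale: "kconj m (kscale c x) = kscale c (kconj m x)"
  by (auto simp: kconj_def kscale_def)

lemma knorm2_nonneg: "0 \<le> knorm2 m x"
  by (simp add: knorm2_def sum_nonneg)

lemma knorm_eq_sqrt: "knorm m x = sqrt (knorm2 m x)"
  by (simp add: knorm_def knorm2_def)

lemma knorm2_Suc: "knorm2 (Suc m) x = knorm2 m (lo_part m x) + knorm2 m (hi_part m x)"
  using sum_lessThan_add_split[of "\<lambda>i. (x i)\<^sup>2" "2^m" "2^m"]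
  by (simp add: knorm2_def lo_part_def hi_part_def mult_2 add.commute)

lemma kmult_kconj_self:
  "kmult m x (kconj m x) = kreal (knorm2 m x) \<and> kmult m (kconj m x) x = kreal (knorm2 m x)"
proof (induction m arbitrary: x)
  case 0
  show ?case by (auto simp: kconj_def kreal_def knorm2_def power2_eq_square)
next
  case (Suc m)
  have "kconj m (kconj m (lo_part m x)) = lo_part m x"
    by (simp add: kconj_kconj kset_def lo_part_def)
  then show ?case
    by (simp add: lo_part_kconj hi_part_kconj kconj_uminus kmult_uminus Suc.IH kreal_add
        join_parts_kreal knorm2_Suc)
qed

subsection \<open>Euclidean structure and inversion\<close>

lemma knorm2_lincomb:
  "knorm2 m (kscale p x + kscale q y) = p\<^sup>2 * knorm2 m x + 2 * p * q * kinner m x y + q\<^sup>2 * knorm2 m y"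
  by (simp add: knorm2_def kinner_def kscale_def power2_eq_square sum.distrib sum_distrib_left
      algebra_simps)

lemma knorm2_kscale: "knorm2 m (kscale c x) = c\<^sup>2 * knorm2 m x"
  by (simp add: knorm2_def kscale_def power_mult_distrib sum_distrib_left)

lemma knorm2_add: "knorm2 m (x + y) = knorm2 m x + 2 * kinner m x y + knorm2 m y"
proof -
  have "x + y = kscale 1 x + kscale 1 y"
    by (simp add: kscale_def)
  then show ?thesis
    by (simp add: knorm2_lincomb)
qed

lemma knorm2_diff: "knorm2 m (x - y) = knorm2 m x - 2 * kinner m x y + knorm2 m y"
proof -
  have "x - y = kscale 1 x + kscale (- 1) y"
    by (auto simp: kscale_def)
  then show ?thesis
    by (simp add: knorm2_lincomb)
qed

lemma knorm2_add_le: "knorm2 m (x + y) \<le> 2 * knorm2 m x + 2 * knorm2 m y"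
  using knorm2_nonneg[of m "x - y"] by (simp add: knorm2_add knorm2_diff)

lemma knorm2_commute: "knorm2 m (x - y) = knorm2 m (y - x)"
  by (simp add: knorm2_diff kinner_def mult.commute)

lemma knorm2_kconj: "knorm2 m (kconj m x) = knorm2 m x"
  unfolding knorm2_def kconj_def by (rule sum.cong) auto

lemma knorm2_kreal: "knorm2 m (kreal r) = r\<^sup>2"
proof -
  have "knorm2 m (kreal r) = (\<Sum>i<(2::nat)^m. if i = 0 then r\<^sup>2 else 0)"
    unfolding knorm2_def kreal_def by (rule sum.cong) auto
  then show ?thesis
    by simp
qed

lemma coordinate_square_le_knorm2: "i < 2^m \<Longrightarrow> (x i)\<^sup>2 \<le> knorm2 m x"
  unfolding knorm2_def by (rule member_le_sum) auto

lemma knorm2_eq_0_iff: "x \<in> kset m \<Longrightarrow> knorm2 m x = 0 \<longleftrightarrow> x = 0"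
  by (auto simp: knorm2_def kset_def fun_eq_iff sum_nonneg_eq_0_iff) (metis lessThan_iff not_less)

lemma knorm2_pos: "x \<in> kset m \<Longrightarrow> x \<noteq> 0 \<Longrightarrow> 0 < knorm2 m x"
  using knorm2_nonneg[of m x] knorm2_eq_0_iff[of x m] by linarith

lemma kinv_eq_kscale: "kinv m x = kscale (1 / knorm2 m x) (kconj m x)"
  by (simp add: kinv_def kscale_def knorm_eq_sqrt knorm2_nonneg)

lemma kinv_in_kset: "kinv m x \<in> kset m"
  by (simp add: kinv_eq_kscale kscale_in_kset kconj_in_kset)

lemma knorm2_kinv: "knorm2 m (kinv m x) = 1 / knorm2 m x"
  by (simp add: kinv_eq_kscale knorm2_kscale knorm2_kconj power2_eq_square)

lemma kinv_kinv:
  assumes "x \<in> kset m" "x \<noteq> 0"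
  shows "kinv m (kinv m x) = x"
proof -
  have "knorm2 m x \<noteq> 0"
    using assms knorm2_eq_0_iff by blast
  moreover have "kconj m (kinv m x) = kscale (1 / knorm2 m x) x"
    by (simp add: kinv_eq_kscale kconj_kscale kconj_kconj assms(1))
  ultimately show ?thesis
    by (simp add: kinv_eq_kscale[of m "kinv m x"] knorm2_kinv kscale_def)
qed

lemma knorm2_kinv_diff:
  assumes "knorm2 m x \<noteq> 0" "knorm2 m y \<noteq> 0"
  shows "knorm2 m (kinv m x - kinv m y) = knorm2 m (x - y) * knorm2 m (kinv m x) * knorm2 m (kinv m y)"
proof -
  let ?X = "knorm2 m x" and ?Y = "knorm2 m y"
  have "kinv m x - kinv m y = kconj m (kscale (1 / ?X) x + kscale (- 1 / ?Y) y)"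
    by (auto simp: kinv_eq_kscale kscale_def kconj_def)
  then have "knorm2 m (kinv m x - kinv m y)
      = (1 / ?X)\<^sup>2 * ?X + 2 * (1 / ?X) * (- 1 / ?Y) * kinner m x y + (- 1 / ?Y)\<^sup>2 * ?Y"
    by (simp only: knorm2_kconj knorm2_lincomb)
  also have "\<dots> = (?X - 2 * kinner m x y + ?Y) / (?X * ?Y)"
    using assms by (simp add: field_simps power2_eq_square)
  finally show ?thesis
    by (simp add: knorm2_diff knorm2_kinv)
qed

lemma knorm2_Tinv_diff:
  assumes "knorm2 m (x + A) \<noteq> 0" "knorm2 m (z + A) \<noteq> 0"
  shows "knorm2 m (Tinv m A x - Tinv m A z) * knorm2 m (z + A) = knorm2 m (x - z) * knorm2 m (Tinv m A x)"
proof -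
  have "knorm2 m (kinv m (z + A)) * knorm2 m (z + A) = 1"
    using assms(2) by (simp add: knorm2_kinv)
  then show ?thesis
    using knorm2_kinv_diff[OF assms] by (simp add: Tinv_def algebra_simps)
qed

lemma knorm2_diff_le_if_same_cell:
  assumes "s > 0" and same_cell: "\<And>i. i < 2^m \<Longrightarrow> \<lfloor>u i / s\<rfloor> = \<lfloor>w i / s\<rfloor>"
  shows "knorm2 m (u - w) \<le> 2^m * s\<^sup>2"
proof -
  have "((u - w) i)\<^sup>2 \<le> s\<^sup>2" if "i < 2^m" for i
  proof -
    have "\<bar>u i / s - w i / s\<bar> \<le> 1"
      using same_cell[OF that] by linarith
    then have "\<bar>(u - w) i\<bar> \<le> s"
      using \<open>s > 0\<close> by (simp add: abs_le_iff field_simps)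
    then show ?thesis
      by (metis abs_ge_zero power2_abs power_mono)
  qed
  then have "knorm2 m (u - w) \<le> (\<Sum>i<(2::nat)^m. s\<^sup>2)"
    unfolding knorm2_def by (intro sum_mono) simp
  then show ?thesis
    by simp
qed

lemma floor_coordinate_in_range:
  assumes "s > 0" "knorm2 m u \<le> R" "i < 2^m"
  shows "\<lfloor>u i / s\<rfloor> \<in> {- \<lceil>sqrt \<bar>R\<bar> / s\<rceil>..\<lceil>sqrt \<bar>R\<bar> / s\<rceil>}"
proof -
  have "(u i)\<^sup>2 \<le> \<bar>R\<bar>"
    using coordinate_square_le_knorm2[OF assms(3), of u] assms(2) by linarith
  then have "\<bar>u i\<bar> / s \<le> sqrt \<bar>R\<bar> / s"
    using \<open>s > 0\<close> by (simp add: divide_right_mono real_le_rsqrt)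
  then have "\<bar>u i / s\<bar> \<le> \<lceil>sqrt \<bar>R\<bar> / s\<rceil>"
    using \<open>s > 0\<close> by (simp add: abs_divide) linarith
  then have "- \<lceil>sqrt \<bar>R\<bar> / s\<rceil> \<le> u i / s" "u i / s \<le> \<lceil>sqrt \<bar>R\<bar> / s\<rceil>"
    by arith+
  then show ?thesis
    by (simp add: le_floor_iff floor_le_iff)
qed

text \<open>Points in the same cell of a fine enough grid coincide, and only finitely many cells meet
  the ball.\<close>
lemma finite_if_separated_bounded:
  assumes "e > 0"
    and sep: "\<And>u w. u \<in> S \<Longrightarrow> w \<in> S \<Longrightarrow> u \<noteq> w \<Longrightarrow> e \<le> knorm2 m (u - w)"
    and bounded: "\<And>u. u \<in> S \<Longrightarrow> knorm2 m u \<le> R"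
  shows "finite S"
proof -
  define s where "s = sqrt (e / 2 ^ Suc m)"
  have "s > 0" and "2^m * s\<^sup>2 < e"
    using \<open>e > 0\<close> by (simp_all add: s_def)
  define K where "K = \<lceil>sqrt \<bar>R\<bar> / s\<rceil>"
  define cell where "cell u = map (\<lambda>i. \<lfloor>u i / s\<rfloor>) [0..<2^m]" for u :: "nat \<Rightarrow> real"
  have "inj_on cell S"
  proof (rule inj_onI, rule ccontr)
    fix u w
    assume "u \<in> S" "w \<in> S" "cell u = cell w" "u \<noteq> w"
    then have "knorm2 m (u - w) \<le> 2^m * s\<^sup>2"
      using \<open>s > 0\<close> by (intro knorm2_diff_le_if_same_cell) (simp_all add: cell_def map_eq_conv)
    then show False
      using sep[OF \<open>u \<in> S\<close> \<open>w \<in> S\<close> \<open>u \<noteq> w\<close>] \<open>2^m * s\<^sup>2 < e\<close> by linarith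
  qed
  moreover have "cell ` S \<subseteq> {xs. set xs \<subseteq> {-K..K} \<and> length xs = 2^m}"
    using floor_coordinate_in_range[OF \<open>s > 0\<close> bounded] by (auto simp: cell_def K_def)
  then have "finite (cell ` S)"
    by (rule finite_subset) (simp add: finite_lists_length_eq)
  ultimately show ?thesis
    by (blast intro: finite_imageD)
qed

subsection \<open>Discrete subrings closed under conjugation\<close>

locale discrete_conj_subring =
  fixes m :: nat and Z :: "(nat \<Rightarrow> real) set"
  assumes subring: "is_subring m Z" and discrete: "is_discrete m Z"
    and kconj_closed: "\<forall>z\<in>Z. kconj m z \<in> Z"
begin

lemma Z_subset_kset: "z \<in> Z \<Longrightarrow> z \<in> kset m"
  and zero_in_Z: "0 \<in> Z"
  and kone_in_Z: "kone \<in> Z"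
  and Z_add: "x \<in> Z \<Longrightarrow> y \<in> Z \<Longrightarrow> x + y \<in> Z"
  and Z_diff: "x \<in> Z \<Longrightarrow> y \<in> Z \<Longrightarrow> x - y \<in> Z"
  and Z_kmult: "x \<in> Z \<Longrightarrow> y \<in> Z \<Longrightarrow> kmult m x y \<in> Z"
  and Z_kconj: "x \<in> Z \<Longrightarrow> kconj m x \<in> Z"
  using subring kconj_closed unfolding is_subring_def by blast+

lemma kscale_Ints_in_Z:
  assumes "z \<in> Z" "c \<in> \<int>"
  shows "kscale c z \<in> Z"
proof -
  have nat: "kscale (real k) z \<in> Z" for k
  proof (induction k)
    case 0
    show ?case using zero_in_Z by (simp add: kscale_def zero_fun_def)
  next
    case (Suc k)
    have "kscale (real (Suc k)) z = kscale (real k) z + z"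
      by (auto simp: kscale_def algebra_simps)
    then show ?case
      by (metis Suc Z_add assms(1))
  qed
  obtain k where "c = real_of_int k"
    using assms(2) Ints_cases by blast
  then consider "c = real (nat k)" | "kscale c z = 0 - kscale (real (nat (- k))) z"
    by (cases "k \<ge> 0") (auto simp: kscale_def fun_eq_iff)
  then show ?thesis
    by cases (use nat in simp, metis nat Z_diff zero_in_Z)
qed

lemma kreal_in_Z: "r \<in> \<int> \<Longrightarrow> kreal r \<in> Z"
  unfolding kreal_eq_kscale by (rule kscale_Ints_in_Z[OF kone_in_Z])

lemma Z_separated: "\<exists>e>0. \<forall>u\<in>Z. \<forall>w\<in>Z. u \<noteq> w \<longrightarrow> e \<le> knorm2 m (u - w)"
proof -
  obtain e where "e > 0" and e: "\<And>w. w \<in> Z \<Longrightarrow> w \<noteq> 0 \<Longrightarrow> e \<le> knorm m w"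
    using discrete zero_in_Z unfolding is_discrete_def by fastforce
  have "e\<^sup>2 \<le> knorm2 m (u - w)" if "u \<in> Z" "w \<in> Z" "u \<noteq> w" for u w
    using e[of "u - w"] that Z_diff \<open>e > 0\<close> sqrt_ge_absD[of e] by (simp add: knorm_eq_sqrt)
  then show ?thesis
    using \<open>e > 0\<close> by (metis zero_less_power)
qed

text \<open>A non-integral real \<open>r\<close> in \<open>Z\<close> would put the powers of its fractional part, which tend
  to \<open>0\<close>, into \<open>Z\<close>.\<close>
lemma Ints_if_kreal_in_Z:
  assumes "kreal r \<in> Z"
  shows "r \<in> \<int>"
proof (rule ccontr)
  assume "r \<notin> \<int>"
  define t where "t = r - of_int \<lfloor>r\<rfloor>"
  have "0 < t" "t < 1"
    using \<open>r \<notin> \<int>\<close> unfolding t_def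
    by (metis Ints_of_int diff_gt_0_iff_gt floor_less_iff le_less of_int_floor_le) linarith
  have "kreal t \<in> Z"
    unfolding t_def using Z_diff[OF assms kreal_in_Z[of "of_int \<lfloor>r\<rfloor>"]] by (simp add: kreal_diff)
  have powers: "kreal (t ^ j) \<in> Z" for j
  proof (induction j)
    case 0
    show ?case using kone_in_Z by (simp add: kone_eq_kreal)
  next
    case (Suc j)
    show ?case
      using Z_kmult[OF \<open>kreal t \<in> Z\<close> Suc] by (simp add: kmult_kreal)
  qed
  obtain e where "e > 0" and e: "\<And>u w. u \<in> Z \<Longrightarrow> w \<in> Z \<Longrightarrow> u \<noteq> w \<Longrightarrow> e \<le> knorm2 m (u - w)"
    using Z_separated by blast
  have "(\<lambda>j. t ^ j) \<longlonglongrightarrow> 0"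
    using \<open>0 < t\<close> \<open>t < 1\<close> by (simp add: LIMSEQ_power_zero)
  then obtain j where "t ^ j < sqrt e"
    using \<open>e > 0\<close> by (metis order_tendstoD(2) real_sqrt_gt_0_iff eventually_sequentially order_refl)
  then have "(t ^ j)\<^sup>2 < e"
    using \<open>0 < t\<close> by (metis real_sqrt_abs zero_less_power abs_of_pos real_sqrt_less_iff)
  moreover have "e \<le> (t ^ j)\<^sup>2"
    using e[OF powers zero_in_Z] \<open>0 < t\<close> by (simp add: knorm2_kreal)
  ultimately show False
    by simp
qed

lemma knorm2_in_Ints: "z \<in> Z \<Longrightarrow> knorm2 m z \<in> \<int>"
  using Z_kmult[OF _ Z_kconj] kmult_kconj_self Ints_if_kreal_in_Z by metis

lemma finite_Z_ball: "finite {u \<in> Z. knorm2 m u \<le> R}"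
proof -
  obtain e where "e > 0" and "\<forall>u\<in>Z. \<forall>w\<in>Z. u \<noteq> w \<longrightarrow> e \<le> knorm2 m (u - w)"
    using Z_separated by blast
  then show ?thesis
    by (intro finite_if_separated_bounded[where e = e and R = R]) auto
qed

text \<open>Modelled on \<open>z = p q\<^sup>-\<^sup>1 = p q\<^sup>* / \<bar>q\<bar>\<^sup>2\<close> with \<open>u = p q\<^sup>*\<close> and \<open>N = \<bar>q\<bar>\<^sup>2\<close>, for which
  \<open>\<bar>u\<bar>\<^sup>2 / N = \<bar>p\<bar>\<^sup>2\<close> is an integer; this extra integrality keeps the next denominator
  integral in \<open>Z_fraction_Tinv\<close>.\<close>
definition Z_fraction :: "(nat \<Rightarrow> real) \<Rightarrow> real \<Rightarrow> (nat \<Rightarrow> real) \<Rightarrow> bool" where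
  "Z_fraction u N z \<longleftrightarrow> u \<in> Z \<and> N \<in> \<int> \<and> 1 \<le> N \<and> knorm2 m u / N \<in> \<int> \<and> z = kscale (1 / N) u"

lemma Z_fraction_in_kset: "Z_fraction u N z \<Longrightarrow> z \<in> kset m"
  by (auto simp: Z_fraction_def kscale_in_kset Z_subset_kset)

lemma Z_fraction_zero: "Z_fraction 0 1 0"
  by (simp add: Z_fraction_def zero_in_Z knorm2_def kscale_def fun_eq_iff)

lemma Z_fraction_Tinv:
  assumes frac: "Z_fraction u N z" and "A \<in> Z" and "z + A \<noteq> 0"
  shows "Z_fraction (kconj m (u + kscale N A)) (N * knorm2 m (z + A)) (Tinv m A z)"
proof -
  define v where "v = u + kscale N A"
  have "u \<in> Z" "N \<in> \<int>" "1 \<le> N" and u_Ints: "knorm2 m u / N \<in> \<int>" and z: "z = kscale (1 / N) u"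
    using frac by (auto simp: Z_fraction_def)
  have "v \<in> Z"
    unfolding v_def using \<open>u \<in> Z\<close> \<open>A \<in> Z\<close> \<open>N \<in> \<int>\<close> by (intro Z_add kscale_Ints_in_Z)
  have zA: "z + A = kscale (1 / N) v"
    using \<open>1 \<le> N\<close> by (auto simp: z v_def kscale_def field_simps)
  then have "v \<noteq> 0"
    using \<open>z + A \<noteq> 0\<close> by (auto simp: kscale_def)
  then have "knorm2 m v > 0"
    using \<open>v \<in> Z\<close> by (simp add: knorm2_pos Z_subset_kset)
  define N' where "N' = N * knorm2 m (z + A)"
  have N': "N' = knorm2 m v / N"
    using \<open>1 \<le> N\<close> by (simp add: N'_def zA knorm2_kscale power2_eq_square)
  also have "\<dots> = knorm2 m u / N + 2 * kinner m u A + N * knorm2 m A"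
    using \<open>1 \<le> N\<close> knorm2_lincomb[of m 1 u N A]
    by (simp add: v_def kscale_def power2_eq_square field_simps)
  also have "2 * kinner m u A = knorm2 m (u + A) - knorm2 m u - knorm2 m A"
    by (simp add: knorm2_add)
  finally have "N' \<in> \<int>"
    using u_Ints \<open>N \<in> \<int>\<close> \<open>u \<in> Z\<close> \<open>A \<in> Z\<close> by (simp add: Z_add knorm2_in_Ints)
  moreover have "N' > 0"
    using \<open>knorm2 m v > 0\<close> \<open>1 \<le> N\<close> by (simp add: N')
  ultimately have "1 \<le> N'"
    using Ints_nonzero_abs_ge1 by fastforce
  moreover have "knorm2 m (kconj m v) / N' = N"
    using \<open>knorm2 m v > 0\<close> \<open>1 \<le> N\<close> by (simp add: knorm2_kconj N')
  moreover have "Tinv m A z = kscale (1 / N') (kconj m v)"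
    using \<open>1 \<le> N\<close> by (simp add: Tinv_def kinv_eq_kscale zA kconj_kscale N'_def)
      (simp add: kscale_def mult.commute)
  ultimately show ?thesis
    unfolding Z_fraction_def v_def[symmetric] N'_def[symmetric]
    using \<open>v \<in> Z\<close> \<open>N \<in> \<int>\<close> \<open>N' \<in> \<int>\<close> by (simp add: Z_kconj)
qed

end

subsection \<open>Convergents\<close>

lemma orbit_Suc_shift:
  "orbit m a x0 (Suc k) = orbit m (\<lambda>k. a (Suc k)) (Tmap m (a 1) x0) k"
  by (induction k) simp_all

lemma tinv_comp_Suc_shift:
  "tinv_comp m a (Suc n) y = Tinv m (a 1) (tinv_comp m (\<lambda>k. a (Suc k)) n y)"
  by (induction n arbitrary: y) simp_all

context discrete_conj_subring
begin

lemma orbit_in_kset: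
  assumes "\<forall>k\<ge>1. a k \<in> Z" and "x0 \<in> kset m"
  shows "orbit m a x0 k \<in> kset m"
proof (induction k)
  case (Suc k)
  have "a (Suc k) \<in> kset m"
    using assms(1) Z_subset_kset by simp
  then show ?case
    unfolding orbit.simps Tmap_def by (rule kset_diff[OF kinv_in_kset])
qed (simp add: assms(2))

lemma convergent_error_step:
  assumes frac: "Z_fraction u N z" and "A \<in> Z" and "x \<in> kset m" "x \<noteq> 0" "knorm2 m x < 1"
    and err: "knorm2 m (Tmap m A x - z) * N < 1"
  shows "Z_fraction (kconj m (u + kscale N A)) (N * knorm2 m (z + A)) (Tinv m A z)"
    and "knorm2 m (x - Tinv m A z) * (N * knorm2 m (z + A)) = knorm2 m (Tmap m A x - z) * N * knorm2 m x"
proof -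
  define x1 where "x1 = Tmap m A x"
  have "1 \<le> N"
    using frac by (simp add: Z_fraction_def)
  then have "knorm2 m (x1 - z) \<le> knorm2 m (x1 - z) * N"
    using knorm2_nonneg[of m "x1 - z"] by (simp add: mult_le_cancel_left1)
  then have "knorm2 m (x1 - z) < 1"
    using err by (simp add: x1_def)
  moreover have "knorm2 m (x1 + A) = 1 / knorm2 m x"
    by (simp add: x1_def Tmap_def knorm2_kinv)
  then have "knorm2 m (x1 + A) > 1"
    using \<open>knorm2 m x < 1\<close> knorm2_pos[OF \<open>x \<in> kset m\<close> \<open>x \<noteq> 0\<close>] by simp
  ultimately have "z + A \<noteq> 0"
    by (auto simp: eq_neg_iff_add_eq_0[symmetric])
  then show "Z_fraction (kconj m (u + kscale N A)) (N * knorm2 m (z + A)) (Tinv m A z)"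
    by (rule Z_fraction_Tinv[OF frac \<open>A \<in> Z\<close>])
  have "knorm2 m (x1 + A) \<noteq> 0"
    using \<open>knorm2 m (x1 + A) > 1\<close> by simp
  moreover have "knorm2 m (z + A) \<noteq> 0"
    using \<open>z + A \<noteq> 0\<close> Z_fraction_in_kset[OF frac] \<open>A \<in> Z\<close>
    by (simp add: knorm2_eq_0_iff kset_add Z_subset_kset)
  moreover have "x = Tinv m A x1"
    using kinv_kinv \<open>x \<in> kset m\<close> \<open>x \<noteq> 0\<close> by (simp add: x1_def Tmap_def Tinv_def)
  ultimately have "knorm2 m (x - Tinv m A z) * knorm2 m (z + A) = knorm2 m (x1 - z) * knorm2 m x"
    using knorm2_Tinv_diff by metis
  then show "knorm2 m (x - Tinv m A z) * (N * knorm2 m (z + A)) = knorm2 m (Tmap m A x - z) * N * knorm2 m x"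
    by (simp add: x1_def algebra_simps)
qed

lemma convergent_error:
  assumes "\<forall>k\<ge>1. a k \<in> Z" and "x0 \<in> kset m"
    and "\<forall>k. orbit m a x0 k \<noteq> 0" and "\<forall>k. knorm2 m (orbit m a x0 k) < 1"
  shows "\<exists>u N. Z_fraction u N (tinv_comp m a n 0) \<and>
    knorm2 m (x0 - tinv_comp m a n 0) * N = (\<Prod>k\<le>n. knorm2 m (orbit m a x0 k))"
  using assms
proof (induction n arbitrary: a x0)
  case 0
  show ?case
  proof (intro exI conjI)
    show "Z_fraction 0 1 (tinv_comp m a 0 0)"
      by (simp only: tinv_comp.simps Z_fraction_zero)
  qed simp
next
  case (Suc n)
  define a' where "a' k = a (Suc k)" for k
  define x1 where "x1 = Tmap m (a 1) x0"
  have orbit_a': "orbit m a' x1 k = orbit m a x0 (Suc k)" for k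
    unfolding a'_def x1_def by (rule orbit_Suc_shift[symmetric])
  have "a 1 \<in> Z" "x0 \<noteq> 0" "knorm2 m x0 < 1"
    using Suc.prems spec[OF Suc.prems(3), of 0] spec[OF Suc.prems(4), of 0] by auto
  then have "x1 \<in> kset m"
    by (simp add: x1_def Tmap_def kset_diff kinv_in_kset Z_subset_kset)
  moreover have "\<forall>k\<ge>1. a' k \<in> Z"
    using Suc.prems(1) by (simp add: a'_def)
  ultimately obtain u N where frac: "Z_fraction u N (tinv_comp m a' n 0)"
    and err: "knorm2 m (x1 - tinv_comp m a' n 0) * N = (\<Prod>k\<le>n. knorm2 m (orbit m a x0 (Suc k)))"
    using Suc.IH[of a' x1] Suc.prems(3,4) unfolding orbit_a' by blast
  moreover have "(\<Prod>k\<le>n. knorm2 m (orbit m a x0 (Suc k))) < 1"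
    using Suc.prems(4) by (simp add: prod_atMost_less_1 knorm2_nonneg del: orbit.simps(2))
  ultimately have "knorm2 m (Tmap m (a 1) x0 - tinv_comp m a' n 0) * N < 1"
    by (simp add: x1_def)
  note step = convergent_error_step[OF frac \<open>a 1 \<in> Z\<close> \<open>x0 \<in> kset m\<close> \<open>x0 \<noteq> 0\<close> \<open>knorm2 m x0 < 1\<close> this]
  have convergent_Suc: "tinv_comp m a (Suc n) 0 = Tinv m (a 1) (tinv_comp m a' n 0)"
    unfolding a'_def by (rule tinv_comp_Suc_shift)
  show ?case
    unfolding prod.atMost_Suc_shift orbit.simps(1) convergent_Suc
  proof (intro exI conjI)
    show "Z_fraction (kconj m (u + kscale N (a 1))) (N * knorm2 m (tinv_comp m a' n 0 + a 1))
        (Tinv m (a 1) (tinv_comp m a' n 0))"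
      by (rule step(1))
    show "knorm2 m (x0 - Tinv m (a 1) (tinv_comp m a' n 0)) * (N * knorm2 m (tinv_comp m a' n 0 + a 1))
        = knorm2 m x0 * (\<Prod>k\<le>n. knorm2 m (orbit m a x0 (Suc k)))"
      unfolding step(2)[folded x1_def] err by (rule mult.commute)
  qed
qed

lemma finite_bounded_Z_fractions:
  "finite {(N, u). \<exists>z. Z_fraction u N z \<and> N \<le> B \<and> knorm2 m z \<le> C}"
proof -
  have "N \<in> \<int> \<and> 1 \<le> N \<and> N \<le> B \<and> u \<in> Z \<and> knorm2 m u \<le> B\<^sup>2 * C"
    if "Z_fraction u N z" "N \<le> B" "knorm2 m z \<le> C" for N u z
  proof -
    have "u \<in> Z" "N \<in> \<int>" "1 \<le> N" "u = kscale N z"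
      using that(1) by (auto simp: Z_fraction_def kscale_def)
    moreover have "N\<^sup>2 * knorm2 m z \<le> B\<^sup>2 * C"
      using \<open>1 \<le> N\<close> that(2,3) knorm2_nonneg[of m z] by (intro mult_mono power_mono) auto
    ultimately show ?thesis
      using that(2) by (simp add: knorm2_kscale)
  qed
  then have "{(N, u). \<exists>z. Z_fraction u N z \<and> N \<le> B \<and> knorm2 m z \<le> C}
      \<subseteq> {N \<in> \<int>. 1 \<le> N \<and> N \<le> B} \<times> {u \<in> Z. knorm2 m u \<le> B\<^sup>2 * C}"
    by blast
  moreover have "finite ({N \<in> \<int>. 1 \<le> N \<and> N \<le> B} \<times> {u \<in> Z. knorm2 m u \<le> B\<^sup>2 * C})"
    using finite_int_segment[of 1 B] finite_Z_ball by blast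
  ultimately show ?thesis
    by (rule finite_subset)
qed

lemma finite_Z_fractions_error_ge:
  assumes "r > 0"
  shows "finite {(N, u). \<exists>z. Z_fraction u N z \<and> r \<le> knorm2 m (x - z) \<and> knorm2 m (x - z) * N \<le> 1}"
proof (rule finite_subset[OF _ finite_bounded_Z_fractions])
  show "{(N, u). \<exists>z. Z_fraction u N z \<and> r \<le> knorm2 m (x - z) \<and> knorm2 m (x - z) * N \<le> 1}
      \<subseteq> {(N, u). \<exists>z. Z_fraction u N z \<and> N \<le> 1 / r \<and> knorm2 m z \<le> 2 * knorm2 m x + 2}"
  proof clarify
    fix N u z
    assume frac: "Z_fraction u N z" and "r \<le> knorm2 m (x - z)" and err: "knorm2 m (x - z) * N \<le> 1"
    have "1 \<le> N"
      using frac by (simp add: Z_fraction_def)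
    then have "r * N \<le> knorm2 m (x - z) * N"
      using \<open>r \<le> knorm2 m (x - z)\<close> by (simp add: mult_right_mono)
    moreover have "knorm2 m (x - z) \<le> knorm2 m (x - z) * N"
      using \<open>1 \<le> N\<close> knorm2_nonneg[of m "x - z"] by (simp add: mult_le_cancel_left1)
    ultimately have "r * N \<le> 1" and "knorm2 m (x - z) \<le> 1"
      using err by linarith+
    then have "N \<le> 1 / r" and "knorm2 m z \<le> 2 * knorm2 m x + 2"
      using \<open>r > 0\<close> knorm2_add_le[of m x "z - x"] knorm2_commute[of m x z] by (simp_all add: field_simps)
    then show "\<exists>z. Z_fraction u N z \<and> N \<le> 1 / r \<and> knorm2 m z \<le> 2 * knorm2 m x + 2"
      using frac by blast
  qed
qed

lemma tendsto_zero_if_Z_fractions: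
  assumes frac: "\<And>n. Z_fraction (u n) (N n) (c n)"
    and err: "\<And>n. knorm2 m (x - c n) * N n = E n"
    and "inj E" and "\<And>n. E n \<le> 1"
  shows "(\<lambda>n. knorm2 m (x - c n)) \<longlonglongrightarrow> 0"
proof (rule tendsto_zero_if_finite_ge)
  have "inj (\<lambda>n. (N n, u n))"
  proof (rule injI)
    fix n n'
    assume "(N n, u n) = (N n', u n')"
    then have "c n = c n'" and "N n = N n'"
      using frac[of n] frac[of n'] by (simp_all add: Z_fraction_def)
    then have "E n = E n'"
      by (simp flip: err)
    then show "n = n'"
      using \<open>inj E\<close> by (simp add: inj_eq)
  qed
  fix r :: real
  assume "r > 0"
  have "(\<lambda>n. (N n, u n)) ` {n. r \<le> knorm2 m (x - c n)}
      \<subseteq> {(N, u). \<exists>z. Z_fraction u N z \<and> r \<le> knorm2 m (x - z) \<and> knorm2 m (x - z) * N \<le> 1}"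
    using frac err \<open>\<And>n. E n \<le> 1\<close> by force
  then have "finite ((\<lambda>n. (N n, u n)) ` {n. r \<le> knorm2 m (x - c n)})"
    using finite_Z_fractions_error_ge[OF \<open>r > 0\<close>] by (rule finite_subset)
  then show "finite {n. r \<le> knorm2 m (x - c n)}"
    using inj_on_subset[OF \<open>inj (\<lambda>n. (N n, u n))\<close> subset_UNIV] by (rule finite_imageD)
qed (simp add: knorm2_nonneg)

theorem convergents_tendsto:
  assumes "\<forall>k\<ge>1. a k \<in> Z" and "x0 \<in> kset m"
    and "\<forall>k. orbit m a x0 k \<noteq> 0" and "\<forall>k. knorm2 m (orbit m a x0 k) < 1"
  shows "(\<lambda>n. knorm2 m (x0 - tinv_comp m a n 0)) \<longlonglongrightarrow> 0"
proof -
  define E where "E n = (\<Prod>k\<le>n. knorm2 m (orbit m a x0 k))" for n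
  have "0 < knorm2 m (orbit m a x0 k)" for k
    using assms(3) orbit_in_kset[OF assms(1,2)] by (simp add: knorm2_pos)
  then have "inj E"
    unfolding E_def using assms(4) by (blast intro: inj_prod_atMost)
  have "E n \<le> 1" for n
    using assms(4) by (simp add: E_def less_imp_le prod_atMost_less_1 knorm2_nonneg)
  have "\<forall>n. \<exists>u N. Z_fraction u N (tinv_comp m a n 0) \<and> knorm2 m (x0 - tinv_comp m a n 0) * N = E n"
    using convergent_error[OF assms] unfolding E_def by blast
  then obtain u N where "\<And>n. Z_fraction (u n) (N n) (tinv_comp m a n 0)"
    and "\<And>n. knorm2 m (x0 - tinv_comp m a n 0) * N n = E n"
    by metis
  then show ?thesis
    using \<open>inj E\<close> \<open>\<And>n. E n \<le> 1\<close>
    by (rule tendsto_zero_if_Z_fractions)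
qed

end

theorem theorem1p2:
  fixes m :: nat and Z :: "(nat \<Rightarrow> real) set"
    and a :: "nat \<Rightarrow> nat \<Rightarrow> real" and x0 :: "nat \<Rightarrow> real"
  assumes "m \<le> 3"
    and "is_subring m Z" and "is_discrete m Z"
    and "\<forall>z\<in>Z. kconj m z \<in> Z"
    and "\<forall>n\<ge>1. a n \<in> Z"
    and "x0 \<in> kset m"
    and "\<forall>n. orbit m a x0 n \<noteq> 0"
    and "\<forall>n. knorm m (orbit m a x0 n) < 1"
  shows "(\<lambda>n. knorm m (tinv_comp m a n 0 - x0)) \<longlonglongrightarrow> 0"
proof -
  interpret discrete_conj_subring m Z
    using assms(2-4) by unfold_locales
  have "\<forall>n. knorm2 m (orbit m a x0 n) < 1"
    using assms(8) by (simp add: knorm_eq_sqrt)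
  then have "(\<lambda>n. knorm2 m (x0 - tinv_comp m a n 0)) \<longlonglongrightarrow> 0"
    using convergents_tendsto assms(5-7) by blast
  then have "(\<lambda>n. sqrt (knorm2 m (x0 - tinv_comp m a n 0))) \<longlonglongrightarrow> 0"
    using tendsto_real_sqrt by fastforce
  then show ?thesis
    by (simp add: knorm_eq_sqrt knorm2_commute[of m _ x0])
qed

end
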